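(* Let $b$ satisfy (b1)–(b4), $u\in BV(\Omega)\cap L^\infty(\Omega)$ and $\lambda\colon\Omega\to[0,1]$ Borel. Then for every $\varphi\in C^1_c(\Omega)$, $$\int_\Omega\varphi\,d[b(\cdot,u),Du]_\lambda=\int_{\mathbb R}\Big(\int_\Omega\varphi\,d(b_t,D\chi_{\{u>t\}})_\lambda\Big)dt .$$
   Context: $\Omega\subseteq\mathbb R^N$ ($N\ge2$) open; $\mathcal{DM}^\infty(\Omega)$ = fields $A\in L^\infty(\Omega;\mathbb R^N)$ with distributional divergence a finite Radon measure. Assumptions on $b\colon\Omega\times\mathbb R\to\mathbb R^N$: (b1) Borel and bounded; (b2) for a.e. $x$, $t\mapsto b(x,t)$ continuous; (b3) $b_t:=b(\cdot,t)\in\mathcal{DM}^\infty(\Omega)$ for all $t$; (b4) $\sigma:=\bigvee_t|\operatorname{div}_xb_t|$ (least upper bound of measures) is a finite Radon measure. $f(\cdot,t)=d\operatorname{div}_xb_t/d\sigma$, $B(x,t)=\int_0^tb(x,s)ds$, $F(x,t)=\int_0^tf(x,s)ds$. $u^\pm$ approximate upper/lower limits, $v^\lambda:=(1-\lambda)v^-+\lambda v^+$ for $v\in BV$. External nonlinear pairing: $[b(\cdot,u),Du]_\lambda:=-((1-\lambda)F(x,u^-)+\lambda F(x,u^+))\sigma+\operatorname{div}(B(x,u(x)))$. Linear $\lambda$-pairing for $A\in\mathcal{DM}^\infty(\Omega)$ and $v\in BV(\Omega)\cap L^\infty(\Omega)$: $(A,Dv)_\lambda:=\operatorname{div}(vA)-v^\lambda\operatorname{div}A$.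 For $\mathcal L^1$-a.e. $t$, $\chi_{\{u>t\}}\in BV(\Omega)$. *)

theory Defs
  imports "HOL-Analysis.Analysis"
begin

definition grad :: "('a::euclidean_space \<Rightarrow> real) \<Rightarrow> 'a \<Rightarrow> 'a" where
  "grad \<phi> x = (\<Sum>i\<in>Basis. frechet_derivative \<phi> (at x) i *\<^sub>R i)"

definition divergence :: "('a::euclidean_space \<Rightarrow> 'a) \<Rightarrow> 'a \<Rightarrow> real" where
  "divergence \<phi> x = (\<Sum>i\<in>Basis. frechet_derivative (\<lambda>y. \<phi> y \<bullet> i) (at x) i)"

definition C1c :: "'a::euclidean_space set \<Rightarrow> ('a \<Rightarrow> real) \<Rightarrow> bool" where
  "C1c \<Omega> \<phi> \<longleftrightarrow> (\<forall>x. \<phi> differentiable (at x)) \<and> continuous_on UNIV (grad \<phi>) \<and>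
     (\<exists>K. compact K \<and> K \<subseteq> \<Omega> \<and> (\<forall>x. x \<notin> K \<longrightarrow> \<phi> x = 0))"

definition C1c_field :: "'a::euclidean_space set \<Rightarrow> ('a \<Rightarrow> 'a) \<Rightarrow> bool" where
  "C1c_field \<Omega> \<phi> \<longleftrightarrow> (\<forall>i\<in>Basis. C1c \<Omega> (\<lambda>x. \<phi> x \<bullet> i))"

definition BV :: "'a::euclidean_space set \<Rightarrow> ('a \<Rightarrow> real) \<Rightarrow> bool" where
  "BV \<Omega> u \<longleftrightarrow> set_integrable lebesgue \<Omega> u \<and>
     (\<exists>C. \<forall>\<phi>. C1c_field \<Omega> \<phi> \<and> (\<forall>x. norm (\<phi> x) \<le> 1) \<longrightarrow>
          (LINT x:\<Omega>|lebesgue. u x * divergence \<phi> x) \<le> C)"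

text \<open>L-infinity(Omega) (measurability comes with BV).\<close>
definition Linf :: "'a::euclidean_space set \<Rightarrow> ('a \<Rightarrow> real) \<Rightarrow> bool" where
  "Linf \<Omega> u \<longleftrightarrow> (\<exists>M. AE x in lebesgue. x \<in> \<Omega> \<longrightarrow> \<bar>u x\<bar> \<le> M)"

definition approx_upper :: "'a::euclidean_space set \<Rightarrow> ('a \<Rightarrow> real) \<Rightarrow> 'a \<Rightarrow> real" where
  "approx_upper \<Omega> u x = Inf {t. ((\<lambda>r. measure lebesgue (ball x r \<inter> {y\<in>\<Omega>. t < u y}) /
                                    measure lebesgue (ball x r)) \<longlongrightarrow> 0) (at_right 0)}"

definition approx_lower :: "'a::euclidean_space set \<Rightarrow> ('a \<Rightarrow> real) \<Rightarrow> 'a \<Rightarrow> real" where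
  "approx_lower \<Omega> u x = Sup {t. ((\<lambda>r. measure lebesgue (ball x r \<inter> {y\<in>\<Omega>. u y < t}) /
                                    measure lebesgue (ball x r)) \<longlongrightarrow> 0) (at_right 0)}"

definition lam_rep :: "'a::euclidean_space set \<Rightarrow> ('a \<Rightarrow> real) \<Rightarrow> ('a \<Rightarrow> real) \<Rightarrow> 'a \<Rightarrow> real" where
  "lam_rep \<Omega> lam v x = (1 - lam x) * approx_lower \<Omega> v x + lam x * approx_upper \<Omega> v x"

text \<open>Integral of phi against the linear lambda-pairing (A, Dv)_lambda = div(vA) - v^lambda div A,
  where div A = g sigma (g the density of div A w.r.t. sigma); the term int phi d div(vA)
  is written distributionally as - int (v A) . grad phi dx.\<close>
definition lin_pairing_int ::
  "'a::euclidean_space set \<Rightarrow> 'a measure \<Rightarrow> ('a \<Rightarrow> 'a) \<Rightarrow> ('a \<Rightarrow> real) \<Rightarrow> ('a \<Rightarrow> real)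
    \<Rightarrow> ('a \<Rightarrow> real) \<Rightarrow> ('a \<Rightarrow> real) \<Rightarrow> real" where
  "lin_pairing_int \<Omega> \<sigma> A g v lam \<phi> =
     - (LINT x:\<Omega>|lebesgue. (v x *\<^sub>R A x) \<bullet> grad \<phi> x)
     - (\<integral>x. \<phi> x * lam_rep \<Omega> lam v x * g x \<partial>\<sigma>)"

definition Fint :: "('a \<Rightarrow> real \<Rightarrow> real) \<Rightarrow> 'a \<Rightarrow> real \<Rightarrow> real" where
  "Fint f x t = interval_lebesgue_integral lborel (ereal 0) (ereal t) (f x)"

definition Bint :: "('a \<Rightarrow> real \<Rightarrow> 'a::euclidean_space) \<Rightarrow> 'a \<Rightarrow> real \<Rightarrow> 'a" where
  "Bint b x t = interval_lebesgue_integral lborel (ereal 0) (ereal t) (b x)"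

text \<open>Integral of phi against the nonlinear pairing
  [b(.,u),Du]_lambda = -((1-lambda)F(x,u^-) + lambda F(x,u^+)) sigma + div(B(x,u(x))).\<close>
definition nonlin_pairing_int ::
  "'a::euclidean_space set \<Rightarrow> 'a measure \<Rightarrow> ('a \<Rightarrow> real \<Rightarrow> 'a) \<Rightarrow> ('a \<Rightarrow> real \<Rightarrow> real)
    \<Rightarrow> ('a \<Rightarrow> real) \<Rightarrow> ('a \<Rightarrow> real) \<Rightarrow> ('a \<Rightarrow> real) \<Rightarrow> real" where
  "nonlin_pairing_int \<Omega> \<sigma> b f u lam \<phi> =
     - (\<integral>x. \<phi> x * ((1 - lam x) * Fint f x (approx_lower \<Omega> u x)
                     + lam x * Fint f x (approx_upper \<Omega> u x)) \<partial>\<sigma>)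
     - (LINT x:\<Omega>|lebesgue. Bint b x (u x) \<bullet> grad \<phi> x)"

end

theory Submission
  imports Defs
begin

(* For every real s, the integral of a function from 0 to s equals its integral against
   [t < s] - [t < 0].  With s = u x this writes B(x, u x) and F(x, u^+- x) as integrals over t
   against [u > t] - [t < 0], and Fubini turns both parts of the nonlinear pairing into integrals
   over t.  On the other side, the lambda-representative of the superlevel indicator of {u > t}
   is (1 - lambda) [t < u^-] + lambda [t < u^+] wherever u^- and u^+ differ from t; as sigma is
   finite, it charges {u^- = t} or {u^+ = t} only for countably many t.  The remaining terms
   [t < 0] (div b_t)(phi) cancel, because the divergence of b_t is f(., t) sigma. *)

section \<open>Lebesgue density zero\<close>

definition ball_fraction :: "'a::euclidean_space set \<Rightarrow> 'a \<Rightarrow> real \<Rightarrow> real" where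
  "ball_fraction E x r = measure lebesgue (ball x r \<inter> E) / measure lebesgue (ball x r)"

definition has_density_zero :: "'a::euclidean_space set \<Rightarrow> 'a \<Rightarrow> bool" where
  "has_density_zero E x \<longleftrightarrow> (ball_fraction E x \<longlongrightarrow> 0) (at_right 0)"

lemma measure_ball_Int_mono:
  fixes E :: "'a::euclidean_space set"
  assumes "E \<in> sets lebesgue" "ball y s \<subseteq> ball x r"
  shows "measure lebesgue (ball y s \<inter> E) \<le> measure lebesgue (ball x r \<inter> E)"
  using assms by (intro measure_mono_fmeasurable) (auto intro: fmeasurable_Int_fmeasurable)

lemma measure_ball_Int_le_annulus:
  fixes E :: "'a::euclidean_space set"
  assumes E: "E \<in> sets lebesgue" and "0 \<le> r" "r \<le> R"
  shows "measure lebesgue (ball x R \<inter> E)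
           \<le> measure lebesgue (ball x r \<inter> E) + unit_ball_vol DIM('a) * (R ^ DIM('a) - r ^ DIM('a))"
proof -
  have fin: "ball x \<rho> \<inter> E \<in> lmeasurable" for \<rho>
    using E by (intro fmeasurable_Int_fmeasurable) auto
  have "measure lebesgue (ball x R \<inter> E) \<le> measure lebesgue ((ball x r \<inter> E) \<union> (ball x R - ball x r))"
    using fin by (intro measure_mono_fmeasurable) (auto intro!: fmeasurable.Un fmeasurable.Diff)
  also have "\<dots> \<le> measure lebesgue (ball x r \<inter> E) + measure lebesgue (ball x R - ball x r)"
    using fin by (intro measure_Un_le) auto
  also have "measure lebesgue (ball x R - ball x r)
      = measure lebesgue (ball x R) - measure lebesgue (ball x r)"
    using assms lmeasurable_ball[of x R] by (intro measure_Diff) (auto simp: fmeasurable_def)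
  finally show ?thesis
    using assms by (simp add: content_ball algebra_simps)
qed

lemma measure_ball_Int_dist_le:
  fixes E :: "'a::euclidean_space set"
  assumes E: "E \<in> sets lebesgue" and "0 \<le> r" "0 \<le> s"
  shows "\<bar>measure lebesgue (ball y s \<inter> E) - measure lebesgue (ball x r \<inter> E)\<bar>
           \<le> unit_ball_vol DIM('a) * ((max r s + dist x y) ^ DIM('a) - min r s ^ DIM('a))"
proof -
  have le: "measure lebesgue (ball y s \<inter> E)
        \<le> measure lebesgue (ball x r \<inter> E)
           + unit_ball_vol DIM('a) * ((max r s + dist x y) ^ DIM('a) - min r s ^ DIM('a))"
    if "0 \<le> r" "0 \<le> s" for x y :: 'a and r s
  proof -
    have "ball y s \<subseteq> ball x (max r s + dist x y)"
    proof
      fix z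
      assume "z \<in> ball y s"
      then have "dist x z < dist x y + s"
        using dist_triangle[of x z y] by simp
      then show "z \<in> ball x (max r s + dist x y)"
        by simp
    qed
    then have "measure lebesgue (ball y s \<inter> E) \<le> measure lebesgue (ball x (max r s + dist x y) \<inter> E)"
      by (rule measure_ball_Int_mono[OF E])
    also have "\<dots> \<le> measure lebesgue (ball x r \<inter> E)
        + unit_ball_vol DIM('a) * ((max r s + dist x y) ^ DIM('a) - r ^ DIM('a))"
      using that by (intro measure_ball_Int_le_annulus[OF E]) (auto intro: add_increasing2)
    moreover have "unit_ball_vol DIM('a) * min r s ^ DIM('a) \<le> unit_ball_vol DIM('a) * r ^ DIM('a)"
      using that by (intro mult_left_mono power_mono) auto
    ultimately show ?thesis
      by (simp only: right_diff_distrib)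
  qed
  show ?thesis
    using le[of r s y x] le[of s r x y] assms
    by (simp add: abs_le_iff dist_commute max.commute min.commute)
qed

lemma continuous_on_measure_ball_Int:
  fixes E :: "'a::euclidean_space set"
  assumes E: "E \<in> sets lebesgue"
  shows "continuous_on (UNIV \<times> {0<..}) (\<lambda>p. measure lebesgue (ball (fst p) (snd p) \<inter> E))"
  unfolding continuous_on_def
proof safe
  fix x :: 'a and r :: real
  assume "0 < r"
  let ?m = "\<lambda>p. measure lebesgue (ball (fst p) (snd p) \<inter> E)"
  let ?g = "\<lambda>p. unit_ball_vol DIM('a)
    * ((max r (snd p) + dist x (fst p)) ^ DIM('a) - min r (snd p) ^ DIM('a))"
  have bound: "eventually (\<lambda>p. norm (?m p - ?m (x, r)) \<le> ?g p) (at (x, r) within UNIV \<times> {0<..})"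
    unfolding eventually_at_filter using \<open>0 < r\<close>
    by (intro always_eventually) (auto intro!: measure_ball_Int_dist_le[OF E])
  have "(?g \<longlongrightarrow> ?g (x, r)) (at (x, r) within UNIV \<times> {0<..})"
    by (intro tendsto_intros)
  then have "(?g \<longlongrightarrow> 0) (at (x, r) within UNIV \<times> {0<..})"
    by simp
  from Lim_null_comparison[OF bound this]
  have "((\<lambda>p. ?m p - ?m (x, r)) \<longlongrightarrow> 0) (at (x, r) within UNIV \<times> {0<..})" .
  then show "(?m \<longlongrightarrow> ?m (x, r)) (at (x, r) within UNIV \<times> {0<..})"
    by (rule LIM_zero_cancel)
qed

lemma continuous_on_ball_fraction:
  fixes E :: "'a::euclidean_space set"
  assumes E: "E \<in> sets lebesgue"
  shows "continuous_on {0<..} (ball_fraction E x)"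
proof -
  have "continuous_on {0<..} (\<lambda>r. measure lebesgue (ball x r \<inter> E))"
    by (rule continuous_on_compose2[OF continuous_on_measure_ball_Int[OF E], of _ "\<lambda>r. (x, r)", simplified])
      (auto intro: continuous_intros)
  then have "continuous_on {0<..}
      (\<lambda>r. measure lebesgue (ball x r \<inter> E) / (unit_ball_vol DIM('a) * r ^ DIM('a)))"
    using unit_ball_vol_pos[of "real DIM('a)"]
    by (intro continuous_intros) (auto simp del: unit_ball_vol_pos)
  then show ?thesis
    by (rule continuous_on_eq) (simp add: ball_fraction_def content_ball)
qed

lemma borel_measurable_ball_fraction:
  fixes E :: "'a::euclidean_space set"
  assumes E: "E \<in> sets lebesgue"
  shows "(\<lambda>x. ball_fraction E x r) \<in> borel_measurable borel"
proof (cases "0 < r")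
  case True
  have "continuous_on UNIV (\<lambda>x. measure lebesgue (ball x r \<inter> E))"
    by (rule continuous_on_compose2[OF continuous_on_measure_ball_Int[OF E], of _ "\<lambda>x. (x, r)", simplified])
      (use True in \<open>auto intro: continuous_intros\<close>)
  then have "continuous_on UNIV
      (\<lambda>x. measure lebesgue (ball x r \<inter> E) / (unit_ball_vol DIM('a) * r ^ DIM('a)))"
    using True unit_ball_vol_pos[of "real DIM('a)"]
    by (intro continuous_intros) (auto simp del: unit_ball_vol_pos)
  then have "continuous_on UNIV (\<lambda>x. ball_fraction E x r)"
    by (rule continuous_on_eq) (use True in \<open>simp add: ball_fraction_def content_ball\<close>)
  then show ?thesis
    by (rule borel_measurable_continuous_onI)
qed (simp add: ball_fraction_def not_less ball_empty)

lemma abs_le_if_abs_le_on_Rats: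
  fixes g :: "real \<Rightarrow> real"
  assumes g: "continuous_on {a<..<b} g" and le: "\<And>q. q \<in> \<rat> \<Longrightarrow> a < q \<Longrightarrow> q < b \<Longrightarrow> \<bar>g q\<bar> \<le> c"
    and r: "a < r" "r < b"
  shows "\<bar>g r\<bar> \<le> c"
proof (rule ccontr)
  assume "\<not> ?thesis"
  moreover have "isCont (\<lambda>r. \<bar>g r\<bar>) r"
    using g r by (intro continuous_intros) (simp add: continuous_on_eq_continuous_at)
  ultimately have "eventually (\<lambda>z. c < \<bar>g z\<bar>) (at r)"
    by (intro order_tendstoD(1)[of "\<lambda>r. \<bar>g r\<bar>"]) (auto simp: isCont_def)
  then obtain d where "0 < d" and d: "\<And>z. z \<noteq> r \<Longrightarrow> dist z r < d \<Longrightarrow> c < \<bar>g z\<bar>"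
    unfolding eventually_at by auto
  obtain q where "q \<in> \<rat>" "max a (r - d) < q" "q < r"
    using Rats_dense_in_real[of "max a (r - d)" r] r \<open>0 < d\<close> by auto
  with le[of q] d[of q] r show False
    by (auto simp: dist_real_def)
qed

lemma tendsto_0_at_right_0_iff_Rats:
  fixes g :: "real \<Rightarrow> real"
  assumes g: "continuous_on {0<..} g"
  shows "(g \<longlongrightarrow> 0) (at_right 0) \<longleftrightarrow>
    (\<forall>n::nat. \<exists>m::nat. \<forall>q::rat. 0 < real_of_rat q \<and> real_of_rat q < inverse (Suc m)
                                  \<longrightarrow> \<bar>g (real_of_rat q)\<bar> \<le> inverse (Suc n))"
    (is "_ \<longleftrightarrow> (\<forall>n. \<exists>m. ?small n m)")
proof
  assume lim: "(g \<longlongrightarrow> 0) (at_right 0)"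
  show "\<forall>n. \<exists>m. ?small n m"
  proof
    fix n
    have "eventually (\<lambda>r. \<bar>g r\<bar> < inverse (Suc n)) (at_right 0)"
      using lim[THEN tendstoD, of "inverse (Suc n)"] by simp
    then obtain \<delta> where "0 < \<delta>" and \<delta>: "\<And>r. 0 < r \<Longrightarrow> r < \<delta> \<Longrightarrow> \<bar>g r\<bar> < inverse (Suc n)"
      unfolding eventually_at_right_field by auto
    obtain m where "inverse (Suc m) < \<delta>"
      using reals_Archimedean[OF \<open>0 < \<delta>\<close>] by auto
    then have "?small n m"
      using \<delta> by (auto intro: less_imp_le)
    then show "\<exists>m. ?small n m" ..
  qed
next
  assume small: "\<forall>n. \<exists>m. ?small n m"
  show "(g \<longlongrightarrow> 0) (at_right 0)"
  proof (rule tendstoI)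
    fix e :: real
    assume "0 < e"
    obtain n where n: "inverse (Suc n) < e"
      using reals_Archimedean[OF \<open>0 < e\<close>] by auto
    obtain m where m: "?small n m"
      using small by blast
    have "\<bar>g r\<bar> \<le> inverse (Suc n)" if "0 < r" "r < inverse (Suc m)" for r
    proof (rule abs_le_if_abs_le_on_Rats[OF continuous_on_subset[OF g] _ that])
      show "\<bar>g q\<bar> \<le> inverse (Suc n)" if "q \<in> \<rat>" "0 < q" "q < inverse (Suc m)" for q
        using m that by (auto elim: Rats_cases)
    qed auto
    then show "eventually (\<lambda>r. dist (g r) 0 < e) (at_right 0)"
      unfolding eventually_at_right_field using n
      by (intro exI[of _ "inverse (Suc m)"]) (auto intro: le_less_trans)
  qed
qed

lemma measurable_has_density_zero [measurable]:
  fixes E :: "'a::euclidean_space set"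
  assumes E: "E \<in> sets lebesgue"
  shows "Measurable.pred borel (has_density_zero E)"
proof -
  note borel_measurable_ball_fraction[OF E, measurable]
  have "Measurable.pred borel (\<lambda>x. \<forall>n::nat. \<exists>m::nat. \<forall>q::rat.
          0 < real_of_rat q \<and> real_of_rat q < inverse (Suc m)
          \<longrightarrow> \<bar>ball_fraction E x (real_of_rat q)\<bar> \<le> inverse (Suc n))"
    by measurable
  then show ?thesis
    unfolding has_density_zero_def tendsto_0_at_right_0_iff_Rats[OF continuous_on_ball_fraction[OF E]] .
qed

lemma has_density_zero_null:
  assumes "E \<in> null_sets lebesgue"
  shows "has_density_zero E x"
proof -
  have "ball x r \<inter> E \<in> null_sets lebesgue" for r
    using assms by (intro null_set_Int1) auto
  then have "ball_fraction E x = (\<lambda>_. 0)"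
    by (simp add: ball_fraction_def measure_eq_0_null_sets fun_eq_iff)
  then show ?thesis
    by (simp add: has_density_zero_def)
qed

lemma has_density_zero_subset:
  assumes E': "E' \<in> sets lebesgue" and "E \<subseteq> E'" and "has_density_zero E' x"
  shows "has_density_zero E x"
proof -
  have le: "ball_fraction E x r \<le> ball_fraction E' x r" for r
  proof -
    have "measure lebesgue (ball x r \<inter> E) \<le> measure lebesgue (ball x r \<inter> E')"
    proof (cases "ball x r \<inter> E \<in> sets lebesgue")
      case True
      then show ?thesis
        using E' \<open>E \<subseteq> E'\<close> by (intro measure_mono_fmeasurable) (auto intro: fmeasurable_Int_fmeasurable)
    qed (simp add: measure_notin_sets)
    then show ?thesis
      unfolding ball_fraction_def by (rule divide_right_mono) simp
  qed
  show ?thesis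
    unfolding has_density_zero_def
  proof (rule tendsto_sandwich)
    show "eventually (\<lambda>r. 0 \<le> ball_fraction E x r) (at_right 0)"
      by (simp add: ball_fraction_def)
    show "eventually (\<lambda>r. ball_fraction E x r \<le> ball_fraction E' x r) (at_right 0)"
      by (simp add: le)
    show "(ball_fraction E' x \<longlongrightarrow> 0) (at_right 0)"
      using \<open>has_density_zero E' x\<close> by (simp add: has_density_zero_def)
  qed simp
qed

lemma not_has_density_zero_conull:
  fixes \<Omega> :: "'a::euclidean_space set"
  assumes "open \<Omega>" "x \<in> \<Omega>" and E: "E \<in> sets lebesgue"
    and N: "N \<in> null_sets lebesgue" and "\<Omega> - N \<subseteq> E"
  shows "\<not> has_density_zero E x"
proof
  assume "has_density_zero E x"
  obtain e where "0 < e" "ball x e \<subseteq> \<Omega>"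
    using assms open_contains_ball by blast
  have "1 \<le> ball_fraction E x r" if "0 < r" "r < e" for r
  proof -
    have "(ball x r \<inter> E) \<union> N \<in> lmeasurable"
      using E N by (intro fmeasurable.Un fmeasurable_Int_fmeasurable[OF lmeasurable_ball])
        (auto simp: fmeasurable_def null_setsD1)
    then have "measure lebesgue (ball x r) \<le> measure lebesgue ((ball x r \<inter> E) \<union> N)"
      using subset_ball[of r e x] that \<open>ball x e \<subseteq> \<Omega>\<close> \<open>\<Omega> - N \<subseteq> E\<close>
      by (intro measure_mono_fmeasurable) auto
    also have "\<dots> = measure lebesgue (ball x r \<inter> E)"
      using E N by (intro measure_Un_null_set) auto
    finally show ?thesis
      using that by (simp add: ball_fraction_def content_ball)
  qed
  then have "eventually (\<lambda>r. 1 \<le> ball_fraction E x r) (at_right 0)"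
    unfolding eventually_at_right_field using \<open>0 < e\<close> by blast
  with \<open>has_density_zero E x\<close> have "(1::real) \<le> 0"
    unfolding has_density_zero_def by (rule tendsto_lowerbound) simp
  then show False
    by simp
qed

section \<open>Approximate upper and lower limits\<close>

lemma approx_upper_eq_Inf: "approx_upper \<Omega> u x = Inf {t. has_density_zero {y\<in>\<Omega>. t < u y} x}"
  unfolding approx_upper_def has_density_zero_def ball_fraction_def ..

lemma approx_lower_eq_Sup: "approx_lower \<Omega> u x = Sup {t. has_density_zero {y\<in>\<Omega>. u y < t} x}"
  unfolding approx_lower_def has_density_zero_def ball_fraction_def ..

lemma approx_lower_eq_uminus_approx_upper: "approx_lower \<Omega> u x = - approx_upper \<Omega> (\<lambda>y. - u y) x"
proof -
  have "uminus ` {t. has_density_zero {y\<in>\<Omega>. t < - u y} x} = {t. has_density_zero {y\<in>\<Omega>. u y < t} x}"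
  proof (intro set_eqI iffI)
    fix t
    assume "t \<in> {t. has_density_zero {y\<in>\<Omega>. u y < t} x}"
    then have "- t \<in> {t. has_density_zero {y\<in>\<Omega>. t < - u y} x}"
      by simp
    then show "t \<in> uminus ` {t. has_density_zero {y\<in>\<Omega>. t < - u y} x}"
      by (rule rev_image_eqI) simp
  qed (auto simp: less_minus_iff)
  then show ?thesis
    by (simp add: approx_upper_eq_Inf approx_lower_eq_Sup Inf_real_def)
qed

lemma approx_upper_indicator:
  fixes \<Omega> :: "'a::euclidean_space set"
  assumes "open \<Omega>" "x \<in> \<Omega>" "E \<subseteq> \<Omega>"
  shows "approx_upper \<Omega> (indicator E) x = of_bool (\<not> has_density_zero E x)"
proof -
  have "\<not> has_density_zero \<Omega> x"
    using assms by (intro not_has_density_zero_conull[of \<Omega> _ _ "{}"]) auto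
  moreover have "{y\<in>\<Omega>. t < indicator E y} = (if t < 0 then \<Omega> else if t < 1 then E else {})" for t :: real
    using \<open>E \<subseteq> \<Omega>\<close> by (auto simp: indicator_def)
  ultimately have "{t::real. has_density_zero {y\<in>\<Omega>. t < indicator E y} x}
      = {of_bool (\<not> has_density_zero E x)..}"
    using has_density_zero_null[of "{}" x] by auto
  then show ?thesis
    by (simp add: approx_upper_eq_Inf)
qed

lemma approx_lower_indicator:
  fixes \<Omega> :: "'a::euclidean_space set"
  assumes "open \<Omega>" "x \<in> \<Omega>" "E \<subseteq> \<Omega>"
  shows "approx_lower \<Omega> (indicator E) x = of_bool (has_density_zero (\<Omega> - E) x)"
proof -
  have "\<not> has_density_zero \<Omega> x"
    using assms by (intro not_has_density_zero_conull[of \<Omega> _ _ "{}"]) auto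
  moreover have "{y\<in>\<Omega>. indicator E y < t} = (if t \<le> 0 then {} else if t \<le> 1 then \<Omega> - E else \<Omega>)" for t :: real
    using \<open>E \<subseteq> \<Omega>\<close> by (auto simp: indicator_def)
  ultimately have "{t::real. has_density_zero {y\<in>\<Omega>. indicator E y < t} x}
      = {..of_bool (has_density_zero (\<Omega> - E) x)}"
    using has_density_zero_null[of "{}" x] by auto
  then show ?thesis
    by (simp add: approx_lower_eq_Sup)
qed

locale essentially_bounded_on =
  fixes \<Omega> :: "'a::euclidean_space set" and u :: "'a \<Rightarrow> real" and M :: real
  assumes open_domain: "open \<Omega>"
    and measurable_on_domain: "(\<lambda>x. indicator \<Omega> x * u x) \<in> borel_measurable lebesgue"
    and ess_bounded: "AE x in lebesgue. x \<in> \<Omega> \<longrightarrow> \<bar>u x\<bar> \<le> M"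
begin

lemma essentially_bounded_on_uminus: "essentially_bounded_on \<Omega> (\<lambda>y. - u y) M"
proof
  show "(\<lambda>x. indicator \<Omega> x * - u x) \<in> borel_measurable lebesgue"
    using measurable_on_domain by simp
qed (use open_domain ess_bounded in auto)

lemma sets_borel_domain [measurable]: "\<Omega> \<in> sets borel"
  using open_domain by simp

lemma sets_level_set:
  assumes "Measurable.pred borel P"
  shows "{y\<in>\<Omega>. P (u y)} \<in> sets lebesgue"
proof -
  have "{y. P (indicator \<Omega> y * u y)} \<in> sets lebesgue"
    using measurable_compose[OF measurable_on_domain assms] by (simp add: pred_def)
  then have "\<Omega> \<inter> {y. P (indicator \<Omega> y * u y)} \<in> sets lebesgue"
    using sets_borel_domain by (intro sets.Int) auto
  also have "\<Omega> \<inter> {y. P (indicator \<Omega> y * u y)} = {y\<in>\<Omega>. P (u y)}"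
    by auto
  finally show ?thesis .
qed

lemma null_sets_above_ess_bound: "{y\<in>\<Omega>. M < \<bar>u y\<bar>} \<in> null_sets lebesgue"
proof -
  have "{y\<in>\<Omega>. M < \<bar>u y\<bar>} \<in> sets lebesgue"
    by (rule sets_level_set[of "\<lambda>s. M < \<bar>s\<bar>"]) measurable
  moreover have "AE x in lebesgue. x \<notin> {y\<in>\<Omega>. M < \<bar>u y\<bar>}"
    using ess_bounded by eventually_elim auto
  ultimately show ?thesis
    by (simp add: AE_iff_null_sets)
qed

lemma sets_superlevel: "{y\<in>\<Omega>. t < u y} \<in> sets lebesgue" "{y\<in>\<Omega>. t \<le> u y} \<in> sets lebesgue"
proof -
  show "{y\<in>\<Omega>. t < u y} \<in> sets lebesgue"
    by (rule sets_level_set[of "\<lambda>s. t < s"]) measurable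
  show "{y\<in>\<Omega>. t \<le> u y} \<in> sets lebesgue"
    by (rule sets_level_set[of "\<lambda>s. t \<le> s"]) measurable
qed

lemma superlevel_has_density_zero_above:
  "M \<le> t \<Longrightarrow> has_density_zero {y\<in>\<Omega>. t < u y} x"
  by (rule has_density_zero_null, rule null_sets_subset[OF null_sets_above_ess_bound sets_superlevel(1)])
     auto

lemma superlevel_not_has_density_zero_below:
  "x \<in> \<Omega> \<Longrightarrow> t < - M \<Longrightarrow> \<not> has_density_zero {y\<in>\<Omega>. t < u y} x"
  by (rule not_has_density_zero_conull[OF open_domain _ sets_superlevel(1) null_sets_above_ess_bound]) auto

lemma
  assumes "x \<in> \<Omega>"
  shows bdd_below_superlevel_density_zero: "bdd_below {t. has_density_zero {y\<in>\<Omega>. t < u y} x}"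
    and approx_upper_abs_le: "\<bar>approx_upper \<Omega> u x\<bar> \<le> M"
proof -
  let ?S = "{t. has_density_zero {y\<in>\<Omega>. t < u y} x}"
  have lower: "- M \<le> t" if "t \<in> ?S" for t
    using that superlevel_not_has_density_zero_below[OF assms] by force
  then show bdd: "bdd_below ?S"
    by (rule bdd_belowI)
  have "M \<in> ?S"
    by (simp add: superlevel_has_density_zero_above)
  then have "Inf ?S \<le> M" "- M \<le> Inf ?S"
    using bdd lower by (auto intro: cInf_lower cInf_greatest)
  then show "\<bar>approx_upper \<Omega> u x\<bar> \<le> M"
    by (simp add: approx_upper_eq_Inf)
qed

lemma less_approx_upper_imp_not_density_zero:
  assumes "x \<in> \<Omega>" "t < approx_upper \<Omega> u x"
  shows "\<not> has_density_zero {y\<in>\<Omega>. t < u y} x" "\<not> has_density_zero {y\<in>\<Omega>. t \<le> u y} x"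
proof -
  show strict: "\<not> has_density_zero {y\<in>\<Omega>. t < u y} x"
    using assms cInf_lower[OF _ bdd_below_superlevel_density_zero, of t x]
    by (auto simp: approx_upper_eq_Inf)
  show "\<not> has_density_zero {y\<in>\<Omega>. t \<le> u y} x"
  proof
    assume "has_density_zero {y\<in>\<Omega>. t \<le> u y} x"
    then have "has_density_zero {y\<in>\<Omega>. t < u y} x"
      by (rule has_density_zero_subset[OF sets_superlevel(2), rotated]) auto
    with strict show False ..
  qed
qed

lemma approx_upper_less_imp_density_zero:
  assumes "x \<in> \<Omega>" "approx_upper \<Omega> u x < t"
  shows "has_density_zero {y\<in>\<Omega>. t \<le> u y} x" "has_density_zero {y\<in>\<Omega>. t < u y} x"
proof -
  have "{s. has_density_zero {y\<in>\<Omega>. s < u y} x} \<noteq> {}"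
    using superlevel_has_density_zero_above by blast
  then obtain s where s: "has_density_zero {y\<in>\<Omega>. s < u y} x" "s < t"
    using assms cInf_less_iff[OF _ bdd_below_superlevel_density_zero] by (auto simp: approx_upper_eq_Inf)
  have "{y\<in>\<Omega>. t \<le> u y} \<subseteq> {y\<in>\<Omega>. s < u y}"
    using \<open>s < t\<close> by auto
  with s(1) show "has_density_zero {y\<in>\<Omega>. t \<le> u y} x"
    by (rule has_density_zero_subset[OF sets_superlevel(1), rotated])
  then show "has_density_zero {y\<in>\<Omega>. t < u y} x"
    by (rule has_density_zero_subset[OF sets_superlevel(2), rotated]) auto
qed

lemma approx_upper_less_iff_Rats:
  assumes "x \<in> \<Omega>"
  shows "approx_upper \<Omega> u x < a \<longleftrightarrow>
           (\<exists>q::rat. real_of_rat q < a \<and> has_density_zero {y\<in>\<Omega>. real_of_rat q < u y} x)"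
proof
  assume "approx_upper \<Omega> u x < a"
  then obtain r where "r \<in> \<rat>" "approx_upper \<Omega> u x < r" "r < a"
    using Rats_dense_in_real by blast
  then show "\<exists>q::rat. real_of_rat q < a \<and> has_density_zero {y\<in>\<Omega>. real_of_rat q < u y} x"
    using approx_upper_less_imp_density_zero(2)[OF assms] by (auto elim!: Rats_cases)
next
  assume "\<exists>q::rat. real_of_rat q < a \<and> has_density_zero {y\<in>\<Omega>. real_of_rat q < u y} x"
  then obtain q :: rat where "real_of_rat q < a" "\<not> real_of_rat q < approx_upper \<Omega> u x"
    using less_approx_upper_imp_not_density_zero(1)[OF assms] by blast
  then show "approx_upper \<Omega> u x < a"
    by linarith
qed

lemma borel_measurable_approx_upper [measurable]:
  "(\<lambda>x. indicator \<Omega> x * approx_upper \<Omega> u x) \<in> borel_measurable borel"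
proof (rule borel_measurable_iff_less[THEN iffD2], intro allI)
  fix a :: real
  note measurable_has_density_zero[OF sets_superlevel(1), measurable]
  have "{x \<in> space borel. indicator \<Omega> x * approx_upper \<Omega> u x < a} =
        {x \<in> space borel.
          (x \<in> \<Omega> \<and> (\<exists>q::rat. real_of_rat q < a \<and> has_density_zero {y\<in>\<Omega>. real_of_rat q < u y} x))
          \<or> (x \<notin> \<Omega> \<and> 0 < a)}"
    by (auto simp: indicator_def approx_upper_less_iff_Rats)
  also have "\<dots> \<in> sets borel"
    by measurable
  finally show "{x \<in> space borel. indicator \<Omega> x * approx_upper \<Omega> u x < a} \<in> sets borel" .
qed

lemma approx_lower_abs_le: "x \<in> \<Omega> \<Longrightarrow> \<bar>approx_lower \<Omega> u x\<bar> \<le> M"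
proof -
  interpret neg: essentially_bounded_on \<Omega> "\<lambda>y. - u y" M
    by (rule essentially_bounded_on_uminus)
  show "x \<in> \<Omega> \<Longrightarrow> ?thesis"
    using neg.approx_upper_abs_le by (simp add: approx_lower_eq_uminus_approx_upper)
qed

lemma borel_measurable_approx_lower [measurable]:
  "(\<lambda>x. indicator \<Omega> x * approx_lower \<Omega> u x) \<in> borel_measurable borel"
proof -
  interpret neg: essentially_bounded_on \<Omega> "\<lambda>y. - u y" M
    by (rule essentially_bounded_on_uminus)
  show ?thesis
    using neg.borel_measurable_approx_upper by (simp add: approx_lower_eq_uminus_approx_upper)
qed

lemma less_approx_lower_imp_density_zero:
  "x \<in> \<Omega> \<Longrightarrow> t < approx_lower \<Omega> u x \<Longrightarrow> has_density_zero {y\<in>\<Omega>. u y \<le> t} x"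
proof -
  interpret neg: essentially_bounded_on \<Omega> "\<lambda>y. - u y" M
    by (rule essentially_bounded_on_uminus)
  show "x \<in> \<Omega> \<Longrightarrow> t < approx_lower \<Omega> u x \<Longrightarrow> ?thesis"
    using neg.approx_upper_less_imp_density_zero(1)[of x "- t"]
    by (simp add: approx_lower_eq_uminus_approx_upper)
qed

lemma approx_lower_less_imp_not_density_zero:
  "x \<in> \<Omega> \<Longrightarrow> approx_lower \<Omega> u x < t \<Longrightarrow> \<not> has_density_zero {y\<in>\<Omega>. u y \<le> t} x"
proof -
  interpret neg: essentially_bounded_on \<Omega> "\<lambda>y. - u y" M
    by (rule essentially_bounded_on_uminus)
  show "x \<in> \<Omega> \<Longrightarrow> approx_lower \<Omega> u x < t \<Longrightarrow> ?thesis"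
    using neg.less_approx_upper_imp_not_density_zero(2)[of x "- t"]
    by (simp add: approx_lower_eq_uminus_approx_upper)
qed

lemma approx_limits_superlevel_indicator:
  assumes x: "x \<in> \<Omega>" and "t \<noteq> approx_upper \<Omega> u x" "t \<noteq> approx_lower \<Omega> u x"
  shows "approx_upper \<Omega> (indicator {y\<in>\<Omega>. t < u y}) x = of_bool (t < approx_upper \<Omega> u x)"
    and "approx_lower \<Omega> (indicator {y\<in>\<Omega>. t < u y}) x = of_bool (t < approx_lower \<Omega> u x)"
proof -
  have "has_density_zero {y\<in>\<Omega>. t < u y} x \<longleftrightarrow> \<not> t < approx_upper \<Omega> u x"
    using assms less_approx_upper_imp_not_density_zero(1)[OF x] approx_upper_less_imp_density_zero(2)[OF x]
    by (meson linorder_neqE)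
  then show "approx_upper \<Omega> (indicator {y\<in>\<Omega>. t < u y}) x = of_bool (t < approx_upper \<Omega> u x)"
    using approx_upper_indicator[OF open_domain x] by simp
  have "\<Omega> - {y\<in>\<Omega>. t < u y} = {y\<in>\<Omega>. u y \<le> t}"
    by auto
  moreover have "has_density_zero {y\<in>\<Omega>. u y \<le> t} x \<longleftrightarrow> t < approx_lower \<Omega> u x"
    using assms less_approx_lower_imp_density_zero[OF x] approx_lower_less_imp_not_density_zero[OF x]
    by (meson linorder_neqE)
  ultimately show "approx_lower \<Omega> (indicator {y\<in>\<Omega>. t < u y}) x = of_bool (t < approx_lower \<Omega> u x)"
    using approx_lower_indicator[OF open_domain x] by simp
qed

end

section \<open>Layer-cake integration\<close>

definition signed_layer :: "real \<Rightarrow> real \<Rightarrow> real" where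
  "signed_layer s t = of_bool (t < s) - of_bool (t < 0)"

lemma measurable_signed_layer [measurable]:
  assumes [measurable]: "f \<in> borel_measurable M" "g \<in> borel_measurable M"
  shows "(\<lambda>x. signed_layer (f x) (g x)) \<in> borel_measurable M"
  unfolding signed_layer_def of_bool_def by measurable

lemma abs_signed_layer_le: "\<bar>s\<bar> \<le> R \<Longrightarrow> \<bar>signed_layer s t\<bar> \<le> indicator {-R..R} t"
  by (auto simp: signed_layer_def indicator_def)

lemma interval_integral_eq_signed_layer:
  fixes g :: "real \<Rightarrow> 'b::{banach, second_countable_topology}"
  assumes [measurable]: "g \<in> borel_measurable lborel"
  shows "interval_lebesgue_integral lborel (ereal 0) (ereal s) g = (\<integral>t. signed_layer s t *\<^sub>R g t \<partial>lborel)"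
proof -
  have "interval_lebesgue_integral lborel (ereal 0) (ereal s) g =
          (\<integral>t. (indicator {0<..<s} t - indicator {s<..<0} t) *\<^sub>R g t \<partial>lborel)"
  proof (cases "0 \<le> s")
    case True
    then show ?thesis
      by (simp add: interval_lebesgue_integral_def set_lebesgue_integral_def)
  next
    case False
    then have "interval_lebesgue_integral lborel (ereal 0) (ereal s) g
        = - (\<integral>t. indicator {s<..<0} t *\<^sub>R g t \<partial>lborel)"
      by (simp add: interval_lebesgue_integral_def set_lebesgue_integral_def)
    also have "\<dots> = (\<integral>t. - (indicator {s<..<0} t *\<^sub>R g t) \<partial>lborel)"
      by (rule integral_minus[symmetric])
    also have "\<dots> = (\<integral>t. (indicator {0<..<s} t - indicator {s<..<0} t) *\<^sub>R g t \<partial>lborel)"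
      using False by (intro Bochner_Integration.integral_cong) (auto simp: indicator_def)
    finally show ?thesis .
  qed
  also have "\<dots> = (\<integral>t. signed_layer s t *\<^sub>R g t \<partial>lborel)"
  proof (rule integral_cong_AE)
    show "AE t in lborel. (indicator {0<..<s} t - indicator {s<..<0} t) *\<^sub>R g t = signed_layer s t *\<^sub>R g t"
      using AE_lborel_singleton[of 0] AE_lborel_singleton[of s]
      by eventually_elim (auto simp: signed_layer_def indicator_def)
  qed measurable
  finally show ?thesis .
qed

lemma integrable_signed_layer_product:
  fixes M :: "'a measure" and k :: "'a \<Rightarrow> real \<Rightarrow> real" and v w :: "'a \<Rightarrow> real"
  assumes "sigma_finite_measure M"
    and k [measurable]: "(\<lambda>p. k (fst p) (snd p)) \<in> borel_measurable (M \<Otimes>\<^sub>M lborel)"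
    and v [measurable]: "v \<in> borel_measurable M" and v_bdd: "AE x in M. \<bar>v x\<bar> \<le> R"
    and w: "integrable M w" and k_bdd: "\<And>t. AE x in M. \<bar>k x t\<bar> \<le> w x"
  shows "integrable (M \<Otimes>\<^sub>M lborel) (\<lambda>(x, t). signed_layer (v x) t * k x t)"
proof -
  interpret pair_sigma_finite M lborel
    using assms(1) by (intro pair_sigma_finite.intro lborel.sigma_finite_measure_axioms)
  have [measurable]: "w \<in> borel_measurable M"
    using w by (rule borel_measurable_integrable)
  let ?bound = "\<lambda>p. w (fst p) * indicator {-R..R} (snd p) :: real"
  have bound_int: "integrable (M \<Otimes>\<^sub>M lborel) ?bound"
  proof (rule Fubini_integrable)
    have "(\<lambda>x. \<integral>t. norm (?bound (x, t)) \<partial>lborel) = (\<lambda>x. \<bar>w x\<bar> * measure lborel {-R..R})"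
      by (simp add: abs_mult)
    then show "integrable M (\<lambda>x. \<integral>t. norm (?bound (x, t)) \<partial>lborel)"
      using w by simp
    show "AE x in M. integrable lborel (\<lambda>t. ?bound (x, t))"
      by (intro AE_I2) (simp add: emeasure_lborel_Icc_eq)
  qed measurable
  have "AE t in lborel. AE x in M. \<bar>k x t\<bar> \<le> w x"
    using k_bdd by simp
  then have "AE x in M. AE t in lborel. \<bar>k x t\<bar> \<le> w x"
    by (subst AE_commute) measurable
  with v_bdd have "AE x in M. AE t in lborel.
      norm (signed_layer (v x) t * k x t) \<le> norm (w x * indicator {-R..R} t)"
  proof eventually_elim
    fix x
    assume v_x: "\<bar>v x\<bar> \<le> R" and k_x: "AE t in lborel. \<bar>k x t\<bar> \<le> w x"
    from k_x show "AE t in lborel. norm (signed_layer (v x) t * k x t) \<le> norm (w x * indicator {-R..R} t)"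
    proof eventually_elim
      fix t
      assume k_t: "\<bar>k x t\<bar> \<le> w x"
      have "\<bar>signed_layer (v x) t\<bar> * \<bar>k x t\<bar> \<le> indicator {-R..R} t * w x"
        using abs_signed_layer_le[OF v_x, of t] k_t by (intro mult_mono) auto
      then show "norm (signed_layer (v x) t * k x t) \<le> norm (w x * indicator {-R..R} t)"
        using k_t by (simp add: abs_mult mult.commute)
    qed
  qed
  then have bound_ae: "AE p in M \<Otimes>\<^sub>M lborel.
      norm (signed_layer (v (fst p)) (snd p) * k (fst p) (snd p)) \<le> norm (?bound p)"
    by (subst (asm) AE_pair_iff) measurable
  show ?thesis
    unfolding case_prod_beta' by (rule Bochner_Integration.integrable_bound[OF bound_int _ bound_ae]) measurable
qed

theorem has_bochner_integral_signed_layer_Fubini: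
  fixes M :: "'a measure" and k :: "'a \<Rightarrow> real \<Rightarrow> real" and v w :: "'a \<Rightarrow> real"
  assumes "sigma_finite_measure M"
    and k [measurable]: "(\<lambda>p. k (fst p) (snd p)) \<in> borel_measurable (M \<Otimes>\<^sub>M lborel)"
    and v [measurable]: "v \<in> borel_measurable M" and v_bdd: "AE x in M. \<bar>v x\<bar> \<le> R"
    and w: "integrable M w" and k_bdd: "\<And>t. AE x in M. \<bar>k x t\<bar> \<le> w x"
  shows "integrable M (\<lambda>x. interval_lebesgue_integral lborel (ereal 0) (ereal (v x)) (k x))"
    and "has_bochner_integral lborel (\<lambda>t. \<integral>x. signed_layer (v x) t * k x t \<partial>M)
           (\<integral>x. interval_lebesgue_integral lborel (ereal 0) (ereal (v x)) (k x) \<partial>M)"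
proof -
  interpret pair_sigma_finite M lborel
    using assms(1) by (intro pair_sigma_finite.intro lborel.sigma_finite_measure_axioms)
  note int = integrable_signed_layer_product[OF assms]
  have inner: "(\<integral>t. signed_layer (v x) t * k x t \<partial>lborel)
      = interval_lebesgue_integral lborel (ereal 0) (ereal (v x)) (k x)"
    if "x \<in> space M" for x
  proof -
    have "k x \<in> borel_measurable lborel"
      using measurable_Pair2[OF k that] by simp
    then show ?thesis
      by (simp add: interval_integral_eq_signed_layer)
  qed
  have "integrable M (\<lambda>x. \<integral>t. signed_layer (v x) t * k x t \<partial>lborel) \<longleftrightarrow>
          integrable M (\<lambda>x. interval_lebesgue_integral lborel (ereal 0) (ereal (v x)) (k x))"
    by (rule Bochner_Integration.integrable_cong) (simp_all add: inner)
  with integrable_fst[OF int]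
  show "integrable M (\<lambda>x. interval_lebesgue_integral lborel (ereal 0) (ereal (v x)) (k x))"
    by simp
  have "(\<integral>t. \<integral>x. signed_layer (v x) t * k x t \<partial>M \<partial>lborel)
      = (\<integral>x. \<integral>t. signed_layer (v x) t * k x t \<partial>lborel \<partial>M)"
    by (rule Fubini_integral[OF int])
  also have "\<dots> = (\<integral>x. interval_lebesgue_integral lborel (ereal 0) (ereal (v x)) (k x) \<partial>M)"
    using inner by (rule Bochner_Integration.integral_cong[OF refl])
  finally show "has_bochner_integral lborel (\<lambda>t. \<integral>x. signed_layer (v x) t * k x t \<partial>M)
           (\<integral>x. interval_lebesgue_integral lborel (ereal 0) (ereal (v x)) (k x) \<partial>M)"
    using integrable_snd[OF int] by (simp add: has_bochner_integral_iff)
qed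

lemma interval_integral_inner_left:
  fixes f :: "real \<Rightarrow> 'a::euclidean_space"
  assumes [measurable]: "f \<in> borel_measurable lborel" and bdd: "\<And>t. norm (f t) \<le> B"
  shows "interval_lebesgue_integral lborel (ereal 0) (ereal s) (\<lambda>t. f t \<bullet> c)
           = interval_lebesgue_integral lborel (ereal 0) (ereal s) f \<bullet> c"
proof -
  have int: "integrable lborel (\<lambda>t. signed_layer s t *\<^sub>R f t)"
  proof (rule Bochner_Integration.integrable_bound)
    show "integrable lborel (\<lambda>t. \<bar>B\<bar> * indicator {-\<bar>s\<bar>..\<bar>s\<bar>} t :: real)"
      by (intro integrable_mult_right integrable_real_indicator) (auto simp: emeasure_lborel_Icc_eq)
    show "AE t in lborel. norm (signed_layer s t *\<^sub>R f t) \<le> norm (\<bar>B\<bar> * indicator {-\<bar>s\<bar>..\<bar>s\<bar>} t :: real)"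
    proof (rule AE_I2)
      fix t
      have "\<bar>signed_layer s t\<bar> * norm (f t) \<le> indicator {-\<bar>s\<bar>..\<bar>s\<bar>} t * \<bar>B\<bar>"
        using abs_signed_layer_le[of s "\<bar>s\<bar>" t] bdd[of t] by (intro mult_mono) auto
      then show "norm (signed_layer s t *\<^sub>R f t) \<le> norm (\<bar>B\<bar> * indicator {-\<bar>s\<bar>..\<bar>s\<bar>} t :: real)"
        by (simp add: mult.commute)
    qed
  qed measurable
  have "interval_lebesgue_integral lborel (ereal 0) (ereal s) (\<lambda>t. f t \<bullet> c)
          = (\<integral>t. (signed_layer s t *\<^sub>R f t) \<bullet> c \<partial>lborel)"
    by (simp add: interval_integral_eq_signed_layer)
  also have "\<dots> = (\<integral>t. signed_layer s t *\<^sub>R f t \<partial>lborel) \<bullet> c"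
    by (rule integral_inner_left) (rule int)
  also have "\<dots> = interval_lebesgue_integral lborel (ereal 0) (ereal s) f \<bullet> c"
    by (simp add: interval_integral_eq_signed_layer)
  finally show ?thesis .
qed

section \<open>The divergence part of the pairing\<close>

lemma sigma_finite_lebesgue: "sigma_finite_measure (lebesgue :: 'a::euclidean_space measure)"
proof -
  obtain A :: "'a set set" where "countable A" "A \<subseteq> sets lborel" "\<Union>A = space lborel"
      "\<forall>a\<in>A. emeasure lborel a \<noteq> \<infinity>"
    using lborel.sigma_finite_countable by blast
  then show ?thesis
    by (intro sigma_finite_measure.intro exI[of _ A]) auto
qed

lemma borel_measurable_zero_extension:
  fixes b :: "'a::euclidean_space \<Rightarrow> real \<Rightarrow> 'a"
  assumes \<Omega>: "\<Omega> \<in> sets borel"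
    and b: "(\<lambda>p. b (fst p) (snd p)) \<in> borel_measurable (restrict_space borel (\<Omega> \<times> UNIV))"
  shows "(\<lambda>p. indicator \<Omega> (fst p) *\<^sub>R b (fst p) (snd p)) \<in> borel_measurable (lebesgue \<Otimes>\<^sub>M lborel)"
proof -
  have "\<Omega> \<times> UNIV \<in> sets (borel :: ('a \<times> real) measure)"
    unfolding borel_prod[symmetric] using \<Omega> by (intro pair_measureI) auto
  then have "(\<lambda>p. indicator (\<Omega> \<times> UNIV) p *\<^sub>R b (fst p) (snd p)) \<in> borel_measurable borel"
    using b borel_measurable_restrict_space_iff[of "\<Omega> \<times> UNIV" borel "\<lambda>p. b (fst p) (snd p)"] by simp
  then have borel: "(\<lambda>p. indicator \<Omega> (fst p) *\<^sub>R b (fst p) (snd p)) \<in> borel_measurable (borel \<Otimes>\<^sub>M borel)"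
    by (simp add: borel_prod indicator_times)
  have "(\<lambda>x. x) \<in> lebesgue \<rightarrow>\<^sub>M (borel :: 'a measure)"
    by (rule measurable_completion) simp
  then have "(\<lambda>p. p) \<in> lebesgue \<Otimes>\<^sub>M lborel \<rightarrow>\<^sub>M (borel :: 'a measure) \<Otimes>\<^sub>M (borel :: real measure)"
    by (intro measurable_Pair[where f=fst and g=snd, simplified] measurable_compose[OF measurable_fst])
      simp_all
  from measurable_compose[OF this borel] show ?thesis .
qed

theorem has_bochner_integral_layer_flux:
  fixes \<beta> :: "'a::euclidean_space \<Rightarrow> real \<Rightarrow> 'a" and v :: "'a \<Rightarrow> real" and g :: "'a \<Rightarrow> 'a"
  assumes \<beta> [measurable]: "(\<lambda>p. \<beta> (fst p) (snd p)) \<in> borel_measurable (lebesgue \<Otimes>\<^sub>M lborel)"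
    and \<beta>_bdd: "\<And>x t. norm (\<beta> x t) \<le> B"
    and v [measurable]: "v \<in> borel_measurable lebesgue" and v_bdd: "AE x in lebesgue. \<bar>v x\<bar> \<le> M"
    and g: "integrable lborel g"
  shows "has_bochner_integral lborel
           (\<lambda>t. (\<integral>x. of_bool (t < v x) * (\<beta> x t \<bullet> g x) \<partial>lebesgue)
                 - of_bool (t < 0) * (\<integral>x. \<beta> x t \<bullet> g x \<partial>lebesgue))
           (\<integral>x. interval_lebesgue_integral lborel (ereal 0) (ereal (v x)) (\<beta> x) \<bullet> g x \<partial>lebesgue)"
proof -
  have [measurable]: "g \<in> borel_measurable lebesgue"
    using g by (intro measurable_completion borel_measurable_integrable)
  have [measurable]: "(\<lambda>x. \<beta> x t) \<in> borel_measurable lebesgue" for t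
    using measurable_compose[OF measurable_Pair2'[of t lborel lebesgue] \<beta>] by simp
  have \<beta>_x: "\<beta> x \<in> borel_measurable lborel" for x
    using measurable_compose[OF measurable_Pair1'[of x lebesgue lborel] \<beta>] by simp
  have flux_bdd: "\<bar>\<beta> x t \<bullet> g x\<bar> \<le> \<bar>B\<bar> * norm (g x)" for x t
    using \<beta>_bdd[of x t] by (intro order.trans[OF Cauchy_Schwarz_ineq2 mult_right_mono]) auto
  have w: "integrable lebesgue (\<lambda>x. \<bar>B\<bar> * norm (g x))"
    using g by (simp add: integrable_completion)
  have flux_int: "integrable lebesgue (\<lambda>x. c x * (\<beta> x t \<bullet> g x))"
    if [measurable]: "c \<in> borel_measurable lebesgue" and c: "\<And>x. \<bar>c x\<bar> \<le> 1" for c t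
  proof (rule Bochner_Integration.integrable_bound[OF w])
    show "AE x in lebesgue. norm (c x * (\<beta> x t \<bullet> g x)) \<le> norm (\<bar>B\<bar> * norm (g x))"
    proof (rule AE_I2)
      fix x
      have "\<bar>c x\<bar> * \<bar>\<beta> x t \<bullet> g x\<bar> \<le> 1 * (\<bar>B\<bar> * norm (g x))"
        using c flux_bdd by (intro mult_mono) auto
      then show "norm (c x * (\<beta> x t \<bullet> g x)) \<le> norm (\<bar>B\<bar> * norm (g x))"
        by (simp add: abs_mult)
    qed
  qed measurable
  have "has_bochner_integral lborel (\<lambda>t. \<integral>x. signed_layer (v x) t * (\<beta> x t \<bullet> g x) \<partial>lebesgue)
          (\<integral>x. interval_lebesgue_integral lborel (ereal 0) (ereal (v x)) (\<lambda>t. \<beta> x t \<bullet> g x) \<partial>lebesgue)"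
    using flux_bdd
    by (intro has_bochner_integral_signed_layer_Fubini(2)[OF sigma_finite_lebesgue _ v v_bdd w]) auto
  moreover have "(\<integral>x. signed_layer (v x) t * (\<beta> x t \<bullet> g x) \<partial>lebesgue)
      = (\<integral>x. of_bool (t < v x) * (\<beta> x t \<bullet> g x) \<partial>lebesgue)
        - of_bool (t < 0) * (\<integral>x. \<beta> x t \<bullet> g x \<partial>lebesgue)" for t
  proof -
    have "(\<lambda>x. of_bool (t < v x) :: real) \<in> borel_measurable lebesgue"
      unfolding of_bool_def by measurable
    then have "integrable lebesgue (\<lambda>x. of_bool (t < v x) * (\<beta> x t \<bullet> g x))"
      "integrable lebesgue (\<lambda>x. of_bool (t < 0) * (\<beta> x t \<bullet> g x))"
      by (intro flux_int; simp)+
    then show ?thesis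
      by (simp add: signed_layer_def left_diff_distrib)
  qed
  moreover have "interval_lebesgue_integral lborel (ereal 0) (ereal (v x)) (\<lambda>t. \<beta> x t \<bullet> g x)
      = interval_lebesgue_integral lborel (ereal 0) (ereal (v x)) (\<beta> x) \<bullet> g x" for x
    using \<beta>_x \<beta>_bdd by (rule interval_integral_inner_left)
  ultimately show ?thesis
    by simp
qed

corollary has_bochner_integral_superlevel_flux:
  fixes \<Omega> :: "'a::euclidean_space set" and b :: "'a \<Rightarrow> real \<Rightarrow> 'a" and u :: "'a \<Rightarrow> real"
    and g :: "'a \<Rightarrow> 'a"
  assumes \<Omega>: "\<Omega> \<in> sets borel"
    and b_meas: "(\<lambda>p. b (fst p) (snd p)) \<in> borel_measurable (restrict_space borel (\<Omega> \<times> UNIV))"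
    and b_bdd: "\<forall>x\<in>\<Omega>. \<forall>t. norm (b x t) \<le> B"
    and u_meas: "(\<lambda>x. indicator \<Omega> x * u x) \<in> borel_measurable lebesgue"
    and u_bdd: "AE x in lebesgue. x \<in> \<Omega> \<longrightarrow> \<bar>u x\<bar> \<le> M"
    and g: "integrable lborel g"
  shows "has_bochner_integral lborel
           (\<lambda>t. (LINT x:\<Omega>|lebesgue. (indicator {y\<in>\<Omega>. t < u y} x *\<^sub>R b x t) \<bullet> g x)
                 - of_bool (t < 0) * (LINT x:\<Omega>|lebesgue. b x t \<bullet> g x))
           (LINT x:\<Omega>|lebesgue. Bint b x (u x) \<bullet> g x)"
proof -
  define \<beta> where "\<beta> x t = indicator \<Omega> x *\<^sub>R b x t" for x t
  define v where "v x = indicator \<Omega> x * u x" for x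
  have "(\<lambda>p. \<beta> (fst p) (snd p)) \<in> borel_measurable (lebesgue \<Otimes>\<^sub>M lborel)"
    unfolding \<beta>_def by (rule borel_measurable_zero_extension[OF \<Omega> b_meas])
  moreover have "norm (\<beta> x t) \<le> \<bar>B\<bar>" for x t
    using b_bdd abs_ge_self[of B] by (auto simp: \<beta>_def indicator_def intro: order.trans)
  moreover have "v \<in> borel_measurable lebesgue"
    using u_meas by (simp add: v_def[abs_def])
  moreover have "AE x in lebesgue. \<bar>v x\<bar> \<le> \<bar>M\<bar>"
    using u_bdd by eventually_elim (auto simp: v_def indicator_def)
  ultimately have flux: "has_bochner_integral lborel
           (\<lambda>t. (\<integral>x. of_bool (t < v x) * (\<beta> x t \<bullet> g x) \<partial>lebesgue)
                 - of_bool (t < 0) * (\<integral>x. \<beta> x t \<bullet> g x \<partial>lebesgue))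
           (\<integral>x. interval_lebesgue_integral lborel (ereal 0) (ereal (v x)) (\<beta> x) \<bullet> g x \<partial>lebesgue)"
    using g by (rule has_bochner_integral_layer_flux)
  have "(\<lambda>x. of_bool (t < v x) * (\<beta> x t \<bullet> g x))
      = (\<lambda>x. indicator \<Omega> x *\<^sub>R ((indicator {y\<in>\<Omega>. t < u y} x *\<^sub>R b x t) \<bullet> g x))"
    "(\<lambda>x. \<beta> x t \<bullet> g x) = (\<lambda>x. indicator \<Omega> x *\<^sub>R (b x t \<bullet> g x))" for t
    by (auto simp: fun_eq_iff \<beta>_def v_def indicator_def)
  moreover have "(\<lambda>x. interval_lebesgue_integral lborel (ereal 0) (ereal (v x)) (\<beta> x) \<bullet> g x)
      = (\<lambda>x. indicator \<Omega> x *\<^sub>R (Bint b x (u x) \<bullet> g x))"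
  proof
    fix x
    show "interval_lebesgue_integral lborel (ereal 0) (ereal (v x)) (\<beta> x) \<bullet> g x
        = indicator \<Omega> x *\<^sub>R (Bint b x (u x) \<bullet> g x)"
      by (cases "x \<in> \<Omega>") (simp_all add: \<beta>_def[abs_def] v_def Bint_def)
  qed
  ultimately show ?thesis
    using flux unfolding set_lebesgue_integral_def by (simp only:)
qed

section \<open>The measure part of the pairing\<close>

lemma
  fixes \<sigma> :: "'a::euclidean_space measure" and f :: "'a \<Rightarrow> real \<Rightarrow> real" and \<psi> v :: "'a \<Rightarrow> real"
  assumes \<sigma>: "finite_measure \<sigma>" "sets \<sigma> = sets borel"
    and f_meas: "(\<lambda>p. f (fst p) (snd p)) \<in> borel_measurable borel"
    and f_bdd: "\<And>t. AE x in \<sigma>. \<bar>f x t\<bar> \<le> 1"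
    and \<psi>: "\<psi> \<in> borel_measurable borel" "\<And>x. \<bar>\<psi> x\<bar> \<le> C"
    and v: "v \<in> borel_measurable borel" "\<And>x. \<bar>v x\<bar> \<le> R"
  shows integrable_Fint: "integrable \<sigma> (\<lambda>x. \<psi> x * Fint f x (v x))"
    and has_bochner_integral_signed_layer_Fint:
      "has_bochner_integral lborel (\<lambda>t. \<integral>x. \<psi> x * signed_layer (v x) t * f x t \<partial>\<sigma>)
         (\<integral>x. \<psi> x * Fint f x (v x) \<partial>\<sigma>)"
proof -
  interpret finite_measure \<sigma> by fact
  have [measurable]: "\<psi> \<in> borel_measurable \<sigma>" "v \<in> borel_measurable \<sigma>"
    using \<psi>(1) v(1) by (simp_all add: measurable_cong_sets[OF \<sigma>(2) refl])
  have "(\<lambda>p. f (fst p) (snd p)) \<in> borel_measurable (\<sigma> \<Otimes>\<^sub>M lborel)"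
    using f_meas
    by (simp add: measurable_cong_sets[OF sets_pair_measure_cong[OF \<sigma>(2) sets_lborel] refl] borel_prod)
  then have k_meas: "(\<lambda>p. \<psi> (fst p) * f (fst p) (snd p)) \<in> borel_measurable (\<sigma> \<Otimes>\<^sub>M lborel)"
    by measurable
  have k_bdd: "AE x in \<sigma>. \<bar>\<psi> x * f x t\<bar> \<le> \<bar>C\<bar>" for t
    using f_bdd[of t]
  proof eventually_elim
    fix x
    assume "\<bar>f x t\<bar> \<le> 1"
    then have "\<bar>\<psi> x\<bar> * \<bar>f x t\<bar> \<le> \<bar>C\<bar> * 1"
      using \<psi>(2)[of x] by (intro mult_mono) auto
    then show "\<bar>\<psi> x * f x t\<bar> \<le> \<bar>C\<bar>"
      by (simp add: abs_mult)
  qed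
  have v_bdd: "AE x in \<sigma>. \<bar>v x\<bar> \<le> R"
    using v(2) by simp
  note fubini = has_bochner_integral_signed_layer_Fubini[where k="\<lambda>x t. \<psi> x * f x t" and w="\<lambda>_. \<bar>C\<bar>",
      OF sigma_finite_measure_axioms k_meas _ v_bdd _ k_bdd]
  show "integrable \<sigma> (\<lambda>x. \<psi> x * Fint f x (v x))"
    using fubini(1) by (simp add: Fint_def)
  show "has_bochner_integral lborel (\<lambda>t. \<integral>x. \<psi> x * signed_layer (v x) t * f x t \<partial>\<sigma>)
         (\<integral>x. \<psi> x * Fint f x (v x) \<partial>\<sigma>)"
    using fubini(2) by (simp add: Fint_def ac_simps)
qed

lemma borel_measurable_slice:
  fixes f :: "'a::second_countable_topology \<Rightarrow> 'b::second_countable_topology \<Rightarrow> 'c::topological_space"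
  assumes "(\<lambda>p. f (fst p) (snd p)) \<in> borel_measurable borel"
  shows "(\<lambda>x. f x t) \<in> borel_measurable borel"
proof -
  have "(\<lambda>p. f (fst p) (snd p)) \<in> borel_measurable (borel \<Otimes>\<^sub>M borel)"
    using assms by (simp add: borel_prod)
  from measurable_compose[OF measurable_Pair2' this] show ?thesis
    by simp
qed

lemma (in finite_measure) countable_atoms:
  fixes g :: "'a \<Rightarrow> real"
  assumes [measurable]: "g \<in> borel_measurable M"
  obtains N where "countable N" "\<And>t. t \<notin> N \<Longrightarrow> AE x in M. g x \<noteq> t"
proof
  interpret image: finite_measure "distr M borel g"
    by (rule finite_measure_distr) simp
  show "countable {t. measure (distr M borel g) {t} \<noteq> 0}"
    by (rule image.countable_support)
  fix t
  assume "t \<notin> {t. measure (distr M borel g) {t} \<noteq> 0}"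
  then have "emeasure M {x\<in>space M. g x = t} = 0"
    by (simp add: measure_distr emeasure_eq_measure vimage_def Int_def conj_commute)
  then show "AE x in M. g x \<noteq> t"
    by (subst AE_iff_measurable[OF _ refl]) auto
qed

lemma has_bochner_integral_lborel_countable_diff:
  fixes f g :: "real \<Rightarrow> 'b::{banach, second_countable_topology}"
  assumes f: "has_bochner_integral lborel f I" and "countable N" and eq: "\<And>t. t \<notin> N \<Longrightarrow> g t = f t"
  shows "has_bochner_integral lborel g I"
proof -
  have f_meas: "f \<in> borel_measurable lborel"
    using f by (rule borel_measurable_has_bochner_integral)
  have g_meas: "g \<in> borel_measurable lborel"
    by (rule measurable_discrete_difference[OF f_meas \<open>countable N\<close>]) (use eq in auto)
  have "AE t in lborel. \<forall>c\<in>N. t \<noteq> c"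
    using \<open>countable N\<close> by (subst AE_ball_countable) (auto intro: AE_lborel_singleton)
  then have "AE t in lborel. f t = g t"
    by eventually_elim (metis eq)
  with f show ?thesis
    using has_bochner_integral_cong_AE[OF f_meas g_meas] by simp
qed

lemma AE_abs_le_1_if_density_le:
  fixes g :: "'a \<Rightarrow> real"
  assumes "finite_measure \<sigma>" and g [measurable]: "g \<in> borel_measurable \<sigma>"
    and le: "\<And>A. A \<in> sets \<sigma> \<Longrightarrow> emeasure (density \<sigma> (\<lambda>x. ennreal \<bar>g x\<bar>)) A \<le> emeasure \<sigma> A"
  shows "AE x in \<sigma>. \<bar>g x\<bar> \<le> 1"
proof -
  interpret finite_measure \<sigma> by fact
  define A where "A = {x\<in>space \<sigma>. 1 < \<bar>g x\<bar>}"
  have A [measurable]: "A \<in> sets \<sigma>"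
    unfolding A_def by measurable
  have "emeasure \<sigma> A + (\<integral>\<^sup>+x. ennreal (\<bar>g x\<bar> - 1) * indicator A x \<partial>\<sigma>)
      = (\<integral>\<^sup>+x. indicator A x + ennreal (\<bar>g x\<bar> - 1) * indicator A x \<partial>\<sigma>)"
    by (subst nn_integral_add) auto
  also have "\<dots> = (\<integral>\<^sup>+x. ennreal \<bar>g x\<bar> * indicator A x \<partial>\<sigma>)"
  proof (rule nn_integral_cong)
    fix x
    show "indicator A x + ennreal (\<bar>g x\<bar> - 1) * indicator A x = ennreal \<bar>g x\<bar> * indicator A x"
      using ennreal_plus[of 1 "\<bar>g x\<bar> - 1"] by (auto simp: A_def indicator_def)
  qed
  also have "\<dots> = emeasure (density \<sigma> (\<lambda>x. ennreal \<bar>g x\<bar>)) A"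
    by (rule emeasure_density[symmetric]) auto
  also have "\<dots> \<le> emeasure \<sigma> A + 0"
    using le[OF A] by simp
  finally have "(\<integral>\<^sup>+x. ennreal (\<bar>g x\<bar> - 1) * indicator A x \<partial>\<sigma>) = 0"
    using ennreal_add_left_cancel_le[of "emeasure \<sigma> A"] emeasure_real by auto
  then have "AE x in \<sigma>. ennreal (\<bar>g x\<bar> - 1) * indicator A x = 0"
    by (subst (asm) nn_integral_0_iff_AE) auto
  with AE_space show ?thesis
    by eventually_elim (auto simp: A_def indicator_def ennreal_eq_0_iff split: if_splits)
qed

context essentially_bounded_on
begin

lemma lam_rep_superlevel:
  assumes "x \<in> \<Omega>" "t \<noteq> approx_upper \<Omega> u x" "t \<noteq> approx_lower \<Omega> u x"
  shows "lam_rep \<Omega> lam (indicator {y\<in>\<Omega>. t < u y}) x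
           = (1 - lam x) * signed_layer (approx_lower \<Omega> u x) t + lam x * signed_layer (approx_upper \<Omega> u x) t
             + of_bool (t < 0)"
  using approx_limits_superlevel_indicator[OF assms] by (simp add: lam_rep_def signed_layer_def algebra_simps)

lemma borel_measurable_lam_rep_superlevel:
  assumes "lam \<in> borel_measurable (restrict_space borel \<Omega>)"
  shows "(\<lambda>x. indicator \<Omega> x * lam_rep \<Omega> lam (indicator {y\<in>\<Omega>. t < u y}) x) \<in> borel_measurable borel"
proof -
  have [measurable]: "(\<lambda>x. indicator \<Omega> x * lam x) \<in> borel_measurable borel"
    using assms borel_measurable_restrict_space_iff[of \<Omega> borel lam] by simp
  have "\<Omega> - {y\<in>\<Omega>. t < u y} \<in> sets lebesgue"
    using sets_superlevel(1) by (intro sets.Diff) auto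
  note this[THEN measurable_has_density_zero, measurable]
    sets_superlevel(1)[THEN measurable_has_density_zero, measurable]
  have "(\<lambda>x. indicator \<Omega> x * lam_rep \<Omega> lam (indicator {y\<in>\<Omega>. t < u y}) x) =
        (\<lambda>x. (indicator \<Omega> x - indicator \<Omega> x * lam x) * of_bool (has_density_zero (\<Omega> - {y\<in>\<Omega>. t < u y}) x)
             + indicator \<Omega> x * lam x * of_bool (\<not> has_density_zero {y\<in>\<Omega>. t < u y} x))"
    by (auto simp: fun_eq_iff indicator_def lam_rep_def approx_upper_indicator approx_lower_indicator
        open_domain algebra_simps)
  also have "\<dots> \<in> borel_measurable borel"
    unfolding of_bool_def by measurable
  finally show ?thesis .
qed

lemma integral_lam_rep_superlevel:
  fixes \<sigma> :: "'a measure" and f :: "'a \<Rightarrow> real \<Rightarrow> real" and lam \<phi> :: "'a \<Rightarrow> real"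
  assumes \<sigma>: "finite_measure \<sigma>" "sets \<sigma> = sets borel"
    and f_meas: "(\<lambda>x. f x t) \<in> borel_measurable borel" and f_bdd: "AE x in \<sigma>. \<bar>f x t\<bar> \<le> 1"
    and lam_meas: "lam \<in> borel_measurable (restrict_space borel \<Omega>)"
    and lam_range: "\<forall>x\<in>\<Omega>. 0 \<le> lam x \<and> lam x \<le> 1"
    and \<phi>_meas: "\<phi> \<in> borel_measurable borel" and \<phi>_bdd: "\<And>x. \<bar>\<phi> x\<bar> \<le> C"
    and \<phi>_\<Omega>: "\<And>x. x \<notin> \<Omega> \<Longrightarrow> \<phi> x = 0"
    and non_atom: "AE x in \<sigma>. x \<in> \<Omega> \<longrightarrow> t \<noteq> approx_lower \<Omega> u x \<and> t \<noteq> approx_upper \<Omega> u x"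
  shows "(\<integral>x. \<phi> x * lam_rep \<Omega> lam (indicator {y\<in>\<Omega>. t < u y}) x * f x t \<partial>\<sigma>)
           - of_bool (t < 0) * (\<integral>x. \<phi> x * f x t \<partial>\<sigma>)
         = (\<integral>x. \<phi> x * (1 - lam x) * signed_layer (approx_lower \<Omega> u x) t * f x t \<partial>\<sigma>)
           + (\<integral>x. \<phi> x * lam x * signed_layer (approx_upper \<Omega> u x) t * f x t \<partial>\<sigma>)"
proof -
  interpret finite_measure \<sigma> by fact
  have [measurable]: "(\<lambda>x. indicator \<Omega> x * lam x) \<in> borel_measurable borel"
    using lam_meas borel_measurable_restrict_space_iff[of \<Omega> borel lam] by simp
  note [measurable] = f_meas \<phi>_meas borel_measurable_lam_rep_superlevel[OF lam_meas]
  define l where "l x = indicator \<Omega> x * lam x" for x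
  define lo where "lo x = indicator \<Omega> x * approx_lower \<Omega> u x" for x
  define up where "up x = indicator \<Omega> x * approx_upper \<Omega> u x" for x
  define R where "R x = indicator \<Omega> x * lam_rep \<Omega> lam (indicator {y\<in>\<Omega>. t < u y}) x" for x
  have [measurable]: "l \<in> borel_measurable borel" "lo \<in> borel_measurable borel" "up \<in> borel_measurable borel"
    "R \<in> borel_measurable borel"
    by (simp_all add: l_def[abs_def] lo_def[abs_def] up_def[abs_def] R_def[abs_def])
  have l_range: "0 \<le> l x \<and> l x \<le> 1" for x
    using lam_range by (simp add: l_def indicator_def)
  have int: "integrable \<sigma> (\<lambda>x. \<phi> x * h x * f x t)"
    if [measurable]: "h \<in> borel_measurable borel" and h: "\<And>x. \<bar>h x\<bar> \<le> 1" for h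
  proof (rule integrable_const_bound)
    show "AE x in \<sigma>. norm (\<phi> x * h x * f x t) \<le> \<bar>C\<bar> * 1 * 1"
      using f_bdd unfolding norm_mult real_norm_def abs_mult
      by eventually_elim (intro mult_mono; use \<phi>_bdd h in \<open>auto intro: order.trans[OF _ abs_ge_self]\<close>)
  qed (unfold measurable_cong_sets[OF \<sigma>(2) refl], measurable)
  have int_\<phi>f: "integrable \<sigma> (\<lambda>x. \<phi> x * f x t)"
    using int[of "\<lambda>_. 1"] by simp
  have layer_weight: "\<bar>w * signed_layer s t\<bar> \<le> 1" if "0 \<le> w" "w \<le> 1" for w s
    using that by (auto simp: abs_mult signed_layer_def)
  have "AE x in \<sigma>. \<phi> x * R x * f x t
          = \<phi> x * ((1 - l x) * signed_layer (lo x) t) * f x t + \<phi> x * (l x * signed_layer (up x) t) * f x t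
            + of_bool (t < 0) * (\<phi> x * 1 * f x t)"
    using non_atom
  proof eventually_elim
    case (elim x)
    then show ?case
      by (cases "x \<in> \<Omega>") (simp_all add: R_def l_def lo_def up_def \<phi>_\<Omega> lam_rep_superlevel algebra_simps)
  qed
  then have "(\<integral>x. \<phi> x * R x * f x t \<partial>\<sigma>)
      = (\<integral>x. \<phi> x * ((1 - l x) * signed_layer (lo x) t) * f x t
            + \<phi> x * (l x * signed_layer (up x) t) * f x t + of_bool (t < 0) * (\<phi> x * 1 * f x t) \<partial>\<sigma>)"
    by (intro integral_cong_AE) (unfold measurable_cong_sets[OF \<sigma>(2) refl], measurable)
  also have "\<dots> = (\<integral>x. \<phi> x * ((1 - l x) * signed_layer (lo x) t) * f x t \<partial>\<sigma>)
      + (\<integral>x. \<phi> x * (l x * signed_layer (up x) t) * f x t \<partial>\<sigma>) + of_bool (t < 0) * (\<integral>x. \<phi> x * 1 * f x t \<partial>\<sigma>)"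
    using l_range
    by (simp add: int int_\<phi>f layer_weight
        Bochner_Integration.integral_add[OF Bochner_Integration.integrable_add])
  finally have "(\<integral>x. \<phi> x * R x * f x t \<partial>\<sigma>) = \<dots>" .
  moreover have "(\<integral>x. \<phi> x * lam_rep \<Omega> lam (indicator {y\<in>\<Omega>. t < u y}) x * f x t \<partial>\<sigma>)
      = (\<integral>x. \<phi> x * R x * f x t \<partial>\<sigma>)"
    "(\<integral>x. \<phi> x * (1 - lam x) * signed_layer (approx_lower \<Omega> u x) t * f x t \<partial>\<sigma>)
      = (\<integral>x. \<phi> x * ((1 - l x) * signed_layer (lo x) t) * f x t \<partial>\<sigma>)"
    "(\<integral>x. \<phi> x * lam x * signed_layer (approx_upper \<Omega> u x) t * f x t \<partial>\<sigma>)
      = (\<integral>x. \<phi> x * (l x * signed_layer (up x) t) * f x t \<partial>\<sigma>)"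
    by (auto intro!: Bochner_Integration.integral_cong simp: R_def l_def lo_def up_def indicator_def \<phi>_\<Omega>)
  ultimately show ?thesis
    by simp
qed

lemma has_bochner_integral_lam_signed_layers:
  fixes \<sigma> :: "'a measure" and f :: "'a \<Rightarrow> real \<Rightarrow> real" and lam \<phi> :: "'a \<Rightarrow> real"
  assumes \<sigma>: "finite_measure \<sigma>" "sets \<sigma> = sets borel"
    and f_meas: "(\<lambda>p. f (fst p) (snd p)) \<in> borel_measurable borel"
    and f_bdd: "\<And>t. AE x in \<sigma>. \<bar>f x t\<bar> \<le> 1"
    and lam_meas: "lam \<in> borel_measurable (restrict_space borel \<Omega>)"
    and lam_range: "\<forall>x\<in>\<Omega>. 0 \<le> lam x \<and> lam x \<le> 1"
    and \<phi>_meas: "\<phi> \<in> borel_measurable borel" and \<phi>_bdd: "\<And>x. \<bar>\<phi> x\<bar> \<le> C"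
    and \<phi>_\<Omega>: "\<And>x. x \<notin> \<Omega> \<Longrightarrow> \<phi> x = 0"
  shows "has_bochner_integral lborel
     (\<lambda>t. (\<integral>x. \<phi> x * (1 - lam x) * signed_layer (approx_lower \<Omega> u x) t * f x t \<partial>\<sigma>)
           + (\<integral>x. \<phi> x * lam x * signed_layer (approx_upper \<Omega> u x) t * f x t \<partial>\<sigma>))
     (\<integral>x. \<phi> x * ((1 - lam x) * Fint f x (approx_lower \<Omega> u x) + lam x * Fint f x (approx_upper \<Omega> u x)) \<partial>\<sigma>)"
proof -
  have [measurable]: "(\<lambda>x. indicator \<Omega> x * lam x) \<in> borel_measurable borel"
    using lam_meas borel_measurable_restrict_space_iff[of \<Omega> borel lam] by simp
  note [measurable] = \<phi>_meas
  define \<psi>\<^sub>1 where "\<psi>\<^sub>1 x = \<phi> x * (1 - indicator \<Omega> x * lam x)" for x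
  define \<psi>\<^sub>2 where "\<psi>\<^sub>2 x = \<phi> x * (indicator \<Omega> x * lam x)" for x
  define lo where "lo x = indicator \<Omega> x * approx_lower \<Omega> u x" for x
  define up where "up x = indicator \<Omega> x * approx_upper \<Omega> u x" for x
  have \<psi>_bdd: "\<bar>\<psi>\<^sub>1 x\<bar> \<le> \<bar>C\<bar>" "\<bar>\<psi>\<^sub>2 x\<bar> \<le> \<bar>C\<bar>" for x
  proof -
    have "\<bar>\<phi> x\<bar> * \<bar>1 - indicator \<Omega> x * lam x\<bar> \<le> \<bar>C\<bar> * 1" "\<bar>\<phi> x\<bar> * \<bar>indicator \<Omega> x * lam x\<bar> \<le> \<bar>C\<bar> * 1"
      using \<phi>_bdd[of x] lam_range by (intro mult_mono; auto simp: indicator_def)+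
    then show "\<bar>\<psi>\<^sub>1 x\<bar> \<le> \<bar>C\<bar>" "\<bar>\<psi>\<^sub>2 x\<bar> \<le> \<bar>C\<bar>"
      by (simp_all add: \<psi>\<^sub>1_def \<psi>\<^sub>2_def abs_mult)
  qed
  have v_bdd: "\<bar>lo x\<bar> \<le> \<bar>M\<bar>" "\<bar>up x\<bar> \<le> \<bar>M\<bar>" for x
    using approx_lower_abs_le[of x] approx_upper_abs_le[of x] by (auto simp: lo_def up_def indicator_def)
  have meas: "\<psi>\<^sub>1 \<in> borel_measurable borel" "\<psi>\<^sub>2 \<in> borel_measurable borel"
      "lo \<in> borel_measurable borel" "up \<in> borel_measurable borel"
    by (simp_all add: \<psi>\<^sub>1_def[abs_def] \<psi>\<^sub>2_def[abs_def] lo_def[abs_def] up_def[abs_def])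
  note lower = integrable_Fint[OF \<sigma> f_meas f_bdd meas(1) \<psi>_bdd(1) meas(3) v_bdd(1)]
    has_bochner_integral_signed_layer_Fint[OF \<sigma> f_meas f_bdd meas(1) \<psi>_bdd(1) meas(3) v_bdd(1)]
  note upper = integrable_Fint[OF \<sigma> f_meas f_bdd meas(2) \<psi>_bdd(2) meas(4) v_bdd(2)]
    has_bochner_integral_signed_layer_Fint[OF \<sigma> f_meas f_bdd meas(2) \<psi>_bdd(2) meas(4) v_bdd(2)]
  have "\<phi> x * (1 - lam x) * signed_layer (approx_lower \<Omega> u x) t = \<psi>\<^sub>1 x * signed_layer (lo x) t"
    "\<phi> x * lam x * signed_layer (approx_upper \<Omega> u x) t = \<psi>\<^sub>2 x * signed_layer (up x) t"
    "\<phi> x * ((1 - lam x) * Fint f x (approx_lower \<Omega> u x) + lam x * Fint f x (approx_upper \<Omega> u x))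
       = \<psi>\<^sub>1 x * Fint f x (lo x) + \<psi>\<^sub>2 x * Fint f x (up x)" for x t
    by (cases "x \<in> \<Omega>"; simp add: \<psi>\<^sub>1_def \<psi>\<^sub>2_def lo_def up_def \<phi>_\<Omega> ring_distribs)+
  with has_bochner_integral_add[OF lower(2) upper(2)] show ?thesis
    by (simp add: Bochner_Integration.integral_add[OF lower(1) upper(1)])
qed

theorem has_bochner_integral_lam_rep_superlevel:
  fixes \<sigma> :: "'a measure" and f :: "'a \<Rightarrow> real \<Rightarrow> real" and lam \<phi> :: "'a \<Rightarrow> real"
  assumes \<sigma>: "finite_measure \<sigma>" "sets \<sigma> = sets borel"
    and f_meas: "(\<lambda>p. f (fst p) (snd p)) \<in> borel_measurable borel"
    and f_bdd: "\<And>t. AE x in \<sigma>. \<bar>f x t\<bar> \<le> 1"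
    and lam_meas: "lam \<in> borel_measurable (restrict_space borel \<Omega>)"
    and lam_range: "\<forall>x\<in>\<Omega>. 0 \<le> lam x \<and> lam x \<le> 1"
    and \<phi>_meas: "\<phi> \<in> borel_measurable borel" and \<phi>_bdd: "\<And>x. \<bar>\<phi> x\<bar> \<le> C"
    and \<phi>_\<Omega>: "\<And>x. x \<notin> \<Omega> \<Longrightarrow> \<phi> x = 0"
  shows "has_bochner_integral lborel
     (\<lambda>t. (\<integral>x. \<phi> x * lam_rep \<Omega> lam (indicator {y\<in>\<Omega>. t < u y}) x * f x t \<partial>\<sigma>)
           - of_bool (t < 0) * (\<integral>x. \<phi> x * f x t \<partial>\<sigma>))
     (\<integral>x. \<phi> x * ((1 - lam x) * Fint f x (approx_lower \<Omega> u x) + lam x * Fint f x (approx_upper \<Omega> u x)) \<partial>\<sigma>)"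
proof -
  interpret finite_measure \<sigma> by fact
  have meas: "(\<lambda>x. indicator \<Omega> x * approx_lower \<Omega> u x) \<in> borel_measurable \<sigma>"
    "(\<lambda>x. indicator \<Omega> x * approx_upper \<Omega> u x) \<in> borel_measurable \<sigma>"
    by (simp_all add: measurable_cong_sets[OF \<sigma>(2) refl])
  obtain N\<^sub>1 where "countable N\<^sub>1"
    and atoms\<^sub>1: "\<And>t. t \<notin> N\<^sub>1 \<Longrightarrow> AE x in \<sigma>. indicator \<Omega> x * approx_lower \<Omega> u x \<noteq> t"
    using countable_atoms[OF meas(1)] by blast
  obtain N\<^sub>2 where "countable N\<^sub>2"
    and atoms\<^sub>2: "\<And>t. t \<notin> N\<^sub>2 \<Longrightarrow> AE x in \<sigma>. indicator \<Omega> x * approx_upper \<Omega> u x \<noteq> t"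
    using countable_atoms[OF meas(2)] by blast
  have non_atom: "AE x in \<sigma>. x \<in> \<Omega> \<longrightarrow> t \<noteq> approx_lower \<Omega> u x \<and> t \<noteq> approx_upper \<Omega> u x"
    if "t \<notin> N\<^sub>1 \<union> N\<^sub>2" for t
  proof -
    have "AE x in \<sigma>. indicator \<Omega> x * approx_lower \<Omega> u x \<noteq> t"
      "AE x in \<sigma>. indicator \<Omega> x * approx_upper \<Omega> u x \<noteq> t"
      using atoms\<^sub>1 atoms\<^sub>2 that by auto
    then show ?thesis
      by eventually_elim auto
  qed
  have eq: "(\<integral>x. \<phi> x * lam_rep \<Omega> lam (indicator {y\<in>\<Omega>. t < u y}) x * f x t \<partial>\<sigma>)
          - of_bool (t < 0) * (\<integral>x. \<phi> x * f x t \<partial>\<sigma>)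
        = (\<integral>x. \<phi> x * (1 - lam x) * signed_layer (approx_lower \<Omega> u x) t * f x t \<partial>\<sigma>)
          + (\<integral>x. \<phi> x * lam x * signed_layer (approx_upper \<Omega> u x) t * f x t \<partial>\<sigma>)"
    if "t \<notin> N\<^sub>1 \<union> N\<^sub>2" for t
    using integral_lam_rep_superlevel[where t=t, OF \<sigma> borel_measurable_slice[OF f_meas] f_bdd lam_meas lam_range
        \<phi>_meas \<phi>_bdd \<phi>_\<Omega> non_atom[OF that]] .
  show ?thesis
    using has_bochner_integral_lam_signed_layers[OF assms] \<open>countable N\<^sub>1\<close> \<open>countable N\<^sub>2\<close>
    by (rule has_bochner_integral_lborel_countable_diff[OF _ countable_Un eq])
qed

end

section \<open>Test functions\<close>

lemma grad_eq_0_outside: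
  fixes \<phi> :: "'a::euclidean_space \<Rightarrow> real"
  assumes "closed K" "\<And>x. x \<notin> K \<Longrightarrow> \<phi> x = 0" "x \<notin> K"
  shows "grad \<phi> x = 0"
proof -
  have "(\<phi> has_derivative (\<lambda>h. 0)) (at x)"
    by (rule has_derivative_transform_within_open[where s="- K" and f="\<lambda>_. 0"]) (use assms in auto)
  then have "frechet_derivative \<phi> (at x) = (\<lambda>h. 0)"
    by (rule frechet_derivative_at[symmetric])
  then show ?thesis
    by (simp add: grad_def)
qed

lemma C1c_support:
  fixes \<phi> :: "'a::euclidean_space \<Rightarrow> real"
  assumes "C1c \<Omega> \<phi>"
  obtains K where "compact K" "K \<subseteq> \<Omega>" "\<And>x. x \<notin> K \<Longrightarrow> \<phi> x = 0" "\<And>x. x \<notin> K \<Longrightarrow> grad \<phi> x = 0"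
    "continuous_on UNIV \<phi>" "continuous_on UNIV (grad \<phi>)"
proof -
  from assms obtain K where K: "compact K" "K \<subseteq> \<Omega>" "\<And>x. x \<notin> K \<Longrightarrow> \<phi> x = 0"
    and diff: "\<And>x. \<phi> differentiable (at x)" and cont_grad: "continuous_on UNIV (grad \<phi>)"
    unfolding C1c_def by blast
  have "continuous_on UNIV \<phi>"
    using diff by (simp add: differentiable_imp_continuous_within continuous_at_imp_continuous_on)
  moreover have "grad \<phi> x = 0" if "x \<notin> K" for x
    using compact_imp_closed[OF K(1)] K(3) that by (rule grad_eq_0_outside)
  ultimately show ?thesis
    using K cont_grad that by blast
qed

lemma
  fixes \<phi> :: "'a::euclidean_space \<Rightarrow> real"
  assumes "C1c \<Omega> \<phi>"
  shows C1c_vanishes_outside: "x \<notin> \<Omega> \<Longrightarrow> \<phi> x = 0"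
    and C1c_borel_measurable: "\<phi> \<in> borel_measurable borel"
    and C1c_bounded: "\<exists>C. \<forall>x. \<bar>\<phi> x\<bar> \<le> C"
    and C1c_integrable_grad: "integrable lborel (grad \<phi>)"
proof -
  obtain K where K: "compact K" "K \<subseteq> \<Omega>" "\<And>x. x \<notin> K \<Longrightarrow> \<phi> x = 0" "\<And>x. x \<notin> K \<Longrightarrow> grad \<phi> x = 0"
    and cont: "continuous_on UNIV \<phi>" "continuous_on UNIV (grad \<phi>)"
    using C1c_support[OF assms] by blast
  show "x \<notin> \<Omega> \<Longrightarrow> \<phi> x = 0"
    using K by auto
  show "\<phi> \<in> borel_measurable borel"
    using cont(1) by (rule borel_measurable_continuous_onI)
  have "bounded (\<phi> ` UNIV)"
  proof (rule bounded_subset)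
    have "compact (\<phi> ` K)"
      using K(1) cont(1) by (auto intro: compact_continuous_image continuous_on_subset)
    then show "bounded (insert 0 (\<phi> ` K))"
      by (simp add: compact_imp_bounded)
  qed (use K(3) in auto)
  then show "\<exists>C. \<forall>x. \<bar>\<phi> x\<bar> \<le> C"
    unfolding bounded_iff by auto
  have "integrable lborel (\<lambda>x. indicator K x *\<^sub>R grad \<phi> x)"
    using K(1) cont(2) by (intro borel_integrable_compact) (auto intro: continuous_on_subset)
  also have "(\<lambda>x. indicator K x *\<^sub>R grad \<phi> x) = grad \<phi>"
    using K(4) by (auto simp: fun_eq_iff indicator_def)
  finally show "integrable lborel (grad \<phi>)" .
qed

theorem theorem5p1:
  fixes \<Omega> :: "'a::euclidean_space set" and b :: "'a \<Rightarrow> real \<Rightarrow> 'a"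
    and \<sigma> :: "'a measure" and f :: "'a \<Rightarrow> real \<Rightarrow> real"
    and u lam \<phi> :: "'a \<Rightarrow> real"
  assumes dim: "DIM('a) \<ge> 2" and open_\<Omega>: "open \<Omega>"
    and b1_meas: "(\<lambda>p. b (fst p) (snd p)) \<in> borel_measurable (restrict_space borel (\<Omega> \<times> UNIV))"
    and b1_bdd: "\<exists>M. \<forall>x\<in>\<Omega>. \<forall>t. norm (b x t) \<le> M"
    and b2: "AE x in lebesgue. x \<in> \<Omega> \<longrightarrow> continuous_on UNIV (b x)"
    and \<sigma>_sets: "sets \<sigma> = sets borel" and \<sigma>_finite: "finite_measure \<sigma>"
    and \<sigma>_on_\<Omega>: "emeasure \<sigma> (UNIV - \<Omega>) = 0"
    and f_meas: "(\<lambda>p. f (fst p) (snd p)) \<in> borel_measurable borel"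
    and b3_div: "\<And>t \<psi>. C1c \<Omega> \<psi> \<Longrightarrow>
        (LINT x:\<Omega>|lebesgue. b x t \<bullet> grad \<psi> x) = - (\<integral>x. \<psi> x * f x t \<partial>\<sigma>)"
    and b4_upper: "\<And>t A. A \<in> sets borel \<Longrightarrow>
        emeasure (density \<sigma> (\<lambda>x. ennreal \<bar>f x t\<bar>)) A \<le> emeasure \<sigma> A"
    and b4_least: "\<And>\<nu>. sets \<nu> = sets borel \<Longrightarrow> finite_measure \<nu> \<Longrightarrow>
        emeasure \<nu> (UNIV - \<Omega>) = 0 \<Longrightarrow>
        (\<forall>t. \<forall>A\<in>sets borel. emeasure (density \<sigma> (\<lambda>x. ennreal \<bar>f x t\<bar>)) A \<le> emeasure \<nu> A) \<Longrightarrow>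
        (\<forall>A\<in>sets borel. emeasure \<sigma> A \<le> emeasure \<nu> A)"
    and u_BV: "BV \<Omega> u" and u_Linf: "Linf \<Omega> u"
    and lam_meas: "lam \<in> borel_measurable (restrict_space borel \<Omega>)"
    and lam_range: "\<forall>x\<in>\<Omega>. 0 \<le> lam x \<and> lam x \<le> 1"
    and \<phi>: "C1c \<Omega> \<phi>"
  shows "has_bochner_integral lborel
           (\<lambda>t. lin_pairing_int \<Omega> \<sigma> (\<lambda>x. b x t) (\<lambda>x. f x t)
                   (indicator {y\<in>\<Omega>. t < u y}) lam \<phi>)
           (nonlin_pairing_int \<Omega> \<sigma> b f u lam \<phi>)"
proof -
  obtain M where M: "AE x in lebesgue. x \<in> \<Omega> \<longrightarrow> \<bar>u x\<bar> \<le> M"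
    using u_Linf unfolding Linf_def by blast
  have u_meas: "(\<lambda>x. indicator \<Omega> x * u x) \<in> borel_measurable lebesgue"
    using u_BV unfolding BV_def set_integrable_def by (auto dest: borel_measurable_integrable)
  then interpret essentially_bounded_on \<Omega> u M
    using open_\<Omega> M by unfold_locales
  obtain B where B: "\<forall>x\<in>\<Omega>. \<forall>t. norm (b x t) \<le> B"
    using b1_bdd by blast
  obtain C where C: "\<And>x. \<bar>\<phi> x\<bar> \<le> C"
    using C1c_bounded[OF \<phi>] by blast
  have f_bdd: "AE x in \<sigma>. \<bar>f x t\<bar> \<le> 1" for t
    using \<sigma>_finite borel_measurable_slice[OF f_meas] b4_upper
    by (intro AE_abs_le_1_if_density_le) (simp_all add: measurable_cong_sets[OF \<sigma>_sets refl] \<sigma>_sets)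
  note flux = has_bochner_integral_superlevel_flux[OF borel_open[OF open_\<Omega>] b1_meas B u_meas M
      C1c_integrable_grad[OF \<phi>]]
  note jump = has_bochner_integral_lam_rep_superlevel[OF \<sigma>_finite \<sigma>_sets f_meas f_bdd lam_meas lam_range
      C1c_borel_measurable[OF \<phi>] C C1c_vanishes_outside[OF \<phi>]]
  have pairing_eq: "lin_pairing_int \<Omega> \<sigma> (\<lambda>x. b x t) (\<lambda>x. f x t) (indicator {y\<in>\<Omega>. t < u y}) lam \<phi>
      = - ((\<integral>x. \<phi> x * lam_rep \<Omega> lam (indicator {y\<in>\<Omega>. t < u y}) x * f x t \<partial>\<sigma>)
           - of_bool (t < 0) * (\<integral>x. \<phi> x * f x t \<partial>\<sigma>))
        - ((LINT x:\<Omega>|lebesgue. (indicator {y\<in>\<Omega>. t < u y} x *\<^sub>R b x t) \<bullet> grad \<phi> x)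
           - of_bool (t < 0) * (LINT x:\<Omega>|lebesgue. b x t \<bullet> grad \<phi> x))" for t
    using b3_div[OF \<phi>, of t] by (simp add: lin_pairing_int_def algebra_simps)
  show ?thesis
    unfolding pairing_eq nonlin_pairing_int_def
    by (intro has_bochner_integral_diff has_bochner_integral_minus jump flux)
qed

end
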